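(* Let $E$ be a real Hilbert space with $\dim(E)\ge2$, $h\in E$ a unit vector, and $f:\mathbb{R}_{\ge0}\to\mathbb{R}_{\ge0}$ with $f(d)=0$ iff $d=0$. Let $x\preceq_f y\iff f(\|y_\perp-x_\perp\|)\le y_h-x_h$. Then the relation $\preceq_f$ is topologically closed in $E\times E$ if and only if $f$ is lower semicontinuous.
   Context: For $x\in E$ write $x=x_h h+x_\perp$ with $x_h=(x,h)$ and $x_\perp$ orthogonal to $h$. *)

theory Defs
  imports "HOL-Analysis.Analysis"
begin

definition comp_h :: "'a::real_inner \<Rightarrow> 'a \<Rightarrow> real" where
  "comp_h h x = x \<bullet> h"

definition perp_h :: "'a::real_inner \<Rightarrow> 'a \<Rightarrow> 'a" where
  "perp_h h x = x - (x \<bullet> h) *\<^sub>R h"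

definition cone_le :: "(real \<Rightarrow> real) \<Rightarrow> 'a::real_inner \<Rightarrow> 'a \<Rightarrow> 'a \<Rightarrow> bool" where
  "cone_le f h x y \<longleftrightarrow> f (norm (perp_h h y - perp_h h x)) \<le> comp_h h y - comp_h h x"

definition lower_semicontinuous_on :: "real set \<Rightarrow> (real \<Rightarrow> real) \<Rightarrow> bool" where
  "lower_semicontinuous_on S f \<longleftrightarrow>
     (\<forall>x\<in>S. \<forall>e>0. \<exists>d>0. \<forall>y\<in>S. dist y x < d \<longrightarrow> f x - e < f y)"

end

theory Submission
  imports Defs
begin

text \<open>Writing \<open>D = \<parallel>y\<^sub>\<perp> - x\<^sub>\<perp>\<parallel>\<close> and \<open>C = y\<^sub>h - x\<^sub>h\<close>, we have \<open>x \<preceq>\<^sub>f y\<close> iff \<open>(D, C)\<close> lies in the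
  epigraph of \<open>f\<close> on \<open>[0, \<infinity>)\<close>. Since \<open>(x, y) \<mapsto> (D, C)\<close> is continuous, a closed epigraph gives
  a closed relation. Conversely, for a unit vector \<open>u \<perp> h\<close> the continuous map
  \<open>(d, c) \<mapsto> (0, d u + c h)\<close> pulls the relation back to the epigraph (on \<open>d \<ge> 0\<close>), so a closed
  relation gives a closed epigraph. Finally a function on a closed set is lower semicontinuous
  iff its epigraph is closed.\<close>

lemma lower_semicontinuous_on_iff_closed_epigraph:
  assumes "closed S"
  shows "lower_semicontinuous_on S f \<longleftrightarrow> closed (epigraph S f)"
proof
  assume lsc: "lower_semicontinuous_on S f"
  show "closed (epigraph S f)"
    unfolding closed_sequential_limits
  proof (intro allI impI, elim conjE)
    fix P and l :: "real \<times> real"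
    assume P: "\<forall>n. P n \<in> epigraph S f" and lim: "P \<longlonglongrightarrow> l"
    obtain x c where l: "l = (x, c)" by fastforce
    have lim_fst: "(\<lambda>n. fst (P n)) \<longlonglongrightarrow> x" and lim_snd: "(\<lambda>n. snd (P n)) \<longlonglongrightarrow> c"
      using tendsto_fst[OF lim] tendsto_snd[OF lim] by (simp_all add: l)
    have "x \<in> S"
      using closed_sequentially[OF assms _ lim_fst] P by (simp add: epigraph_def)
    have "f x \<le> c + e" if "e > 0" for e
    proof -
      obtain d where "d > 0" and d: "\<forall>y\<in>S. dist y x < d \<longrightarrow> f x - e < f y"
        using lsc \<open>x \<in> S\<close> \<open>e > 0\<close> unfolding lower_semicontinuous_on_def by blast
      have "\<forall>\<^sub>F n in sequentially. dist (fst (P n)) x < d"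
        using lim_fst \<open>d > 0\<close> by (rule tendstoD)
      then have "\<forall>\<^sub>F n in sequentially. f x - e \<le> snd (P n)"
        by eventually_elim (use P d in \<open>force simp: epigraph_def\<close>)
      from tendsto_lowerbound[OF lim_snd this] show ?thesis
        by simp
    qed
    then show "l \<in> epigraph S f"
      using \<open>x \<in> S\<close> by (simp add: l mem_epigraph field_le_epsilon)
  qed
next
  assume closed: "closed (epigraph S f)"
  show "lower_semicontinuous_on S f"
    unfolding lower_semicontinuous_on_def
  proof (intro ballI allI impI)
    fix x and e :: real
    assume "x \<in> S" "e > 0"
    then have "(x, f x - e) \<in> - epigraph S f"
      by (simp add: mem_epigraph)
    then obtain d where "d > 0" and d: "\<forall>z. dist z (x, f x - e) < d \<longrightarrow> z \<in> - epigraph S f"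
      using closed unfolding closed_def open_dist by blast
    have "f x - e < f y" if "y \<in> S" "dist y x < d" for y
      using d[rule_format, of "(y, f x - e)"] that by (simp add: dist_Pair_Pair mem_epigraph)
    with \<open>d > 0\<close> show "\<exists>d>0. \<forall>y\<in>S. dist y x < d \<longrightarrow> f x - e < f y"
      by blast
  qed
qed

lemma exists_unit_orthogonal:
  fixes u v h :: "'a::real_inner"
  assumes "independent {u, v}" and "u \<noteq> v"
  shows "\<exists>w. norm w = 1 \<and> w \<bullet> h = 0"
proof -
  have "u \<notin> span {v}"
    using assms by (simp add: independent_insert)
  have "u \<noteq> 0" and "v \<noteq> 0"
    using assms(1) dependent_zero by blast+
  \<comment> \<open>if \<open>w = 0\<close>, independence forces \<open>u \<bullet> h = v \<bullet> h = 0\<close>, so \<open>u\<close> itself will do\<close>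
  define w where "w = (v \<bullet> h) *\<^sub>R u - (u \<bullet> h) *\<^sub>R v"
  have "\<exists>w. w \<noteq> 0 \<and> w \<bullet> h = 0"
  proof (cases "w = 0")
    case True
    have "v \<bullet> h = 0"
    proof (rule ccontr)
      assume "v \<bullet> h \<noteq> 0"
      have "u = inverse (v \<bullet> h) *\<^sub>R ((v \<bullet> h) *\<^sub>R u)"
        using \<open>v \<bullet> h \<noteq> 0\<close> by simp
      also have "\<dots> = inverse (v \<bullet> h) *\<^sub>R ((u \<bullet> h) *\<^sub>R v)"
        using True by (simp add: w_def)
      finally have "u \<in> span {v}"
        by (metis span_base span_mul singletonI)
      with \<open>u \<notin> span {v}\<close> show False ..
    qed
    with True \<open>v \<noteq> 0\<close> have "u \<bullet> h = 0"
      by (simp add: w_def)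
    with \<open>u \<noteq> 0\<close> show ?thesis by blast
  next
    case False
    moreover have "w \<bullet> h = 0"
      by (simp add: w_def inner_diff_left)
    ultimately show ?thesis by blast
  qed
  then obtain w where "w \<noteq> 0" "w \<bullet> h = 0" by blast
  then show ?thesis
    by (intro exI[of _ "w /\<^sub>R norm w"]) simp
qed

lemma perp_h_orthogonal_combination:
  assumes "norm h = 1" and "u \<bullet> h = 0"
  shows "perp_h h (d *\<^sub>R u + c *\<^sub>R h) = d *\<^sub>R u"
  using assms by (simp add: perp_h_def inner_add_left dot_square_norm)

lemma comp_h_orthogonal_combination:
  assumes "norm h = 1" and "u \<bullet> h = 0"
  shows "comp_h h (d *\<^sub>R u + c *\<^sub>R h) = c"
  using assms by (simp add: comp_h_def inner_add_left dot_square_norm)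

lemma cone_le_eq_vimage_epigraph:
  "{(x, y). cone_le f h x y} =
     (\<lambda>(x, y). (norm (perp_h h y - perp_h h x), comp_h h y - comp_h h x)) -` epigraph {0..} f"
  by (auto simp: cone_le_def mem_epigraph)

lemma closed_cone_le_if_closed_epigraph:
  assumes "closed (epigraph {0..} f)"
  shows "closed {(x, y :: 'a::real_inner). cone_le f h x y}"
  unfolding cone_le_eq_vimage_epigraph case_prod_beta perp_h_def comp_h_def
  by (intro continuous_closed_vimage assms continuous_intros)

lemma epigraph_eq_vimage_cone_le:
  assumes "norm h = 1" and "u \<bullet> h = 0" and "norm u = 1"
  shows "epigraph {0..} f =
           ({0..} \<times> UNIV) \<inter> (\<lambda>p. (0, fst p *\<^sub>R u + snd p *\<^sub>R h)) -` {(x, y). cone_le f h x y}"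
proof -
  have "perp_h h 0 = 0" and "comp_h h 0 = 0"
    by (simp_all add: perp_h_def comp_h_def)
  then show ?thesis
    using assms by (auto simp: mem_epigraph cone_le_def perp_h_orthogonal_combination
        comp_h_orthogonal_combination)
qed

lemma closed_epigraph_if_closed_cone_le:
  fixes h u :: "'a::real_inner"
  assumes "norm h = 1" and "u \<bullet> h = 0" and "norm u = 1"
    and "closed {(x, y). cone_le f h x y}"
  shows "closed (epigraph {0..} f)"
  unfolding epigraph_eq_vimage_cone_le[OF assms(1-3)]
  by (intro closed_Int closed_Times closed_atLeast closed_UNIV continuous_closed_vimage assms(4)
      continuous_intros)

theorem mainTheorem14:
  fixes h :: "'a::{real_inner, complete_space}" and f :: "real \<Rightarrow> real"
  assumes dim2: "\<exists>u v::'a. u \<noteq> v \<and> independent {u, v}"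
    and unit: "norm h = 1"
    and fnonneg: "\<forall>d\<ge>0. f d \<ge> 0"
    and fzero: "\<forall>d\<ge>0. f d = 0 \<longleftrightarrow> d = 0"
  shows "closed {(x, y). cone_le f h x y} \<longleftrightarrow> lower_semicontinuous_on {0..} f"
proof -
  obtain u :: 'a where "norm u = 1" "u \<bullet> h = 0"
    using dim2 exists_unit_orthogonal by blast
  then have "closed {(x, y). cone_le f h x y} \<longleftrightarrow> closed (epigraph {0..} f)"
    using unit closed_epigraph_if_closed_cone_le closed_cone_le_if_closed_epigraph by blast
  then show ?thesis
    by (simp add: lower_semicontinuous_on_iff_closed_epigraph)
qed

end
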